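(* Let $\Omega$ be a set and let $G=H\times K\leq{\rm Sym}(\Omega)$ be a finite group which is the internal direct product of subgroups $H\neq 1$ and $K\neq 1$, with $H$ abelian. Then $H$ is a normal subgroup of $G^{(2),\Omega}$. Furthermore, if $\gcd(|H|,|K|)=1$, then $H$ acts intransitively on $\Omega$, and, with $\overline{\Omega}:=\{\alpha^H\mid\alpha\in\Omega\}$ and the action $(\alpha^H)^x=(\alpha^x)^H$ of $G^{(2),\Omega}$ (and of $G$) on $\overline{\Omega}$, the kernel of the action of $G$ on $\overline{\Omega}$ is $H$ and the kernel of the action of $G^{(2),\Omega}$ on $\overline{\Omega}$ is $H^{(2),\Omega}$; that is, $G/H$ and $G^{(2),\Omega}/H^{(2),\Omega}$ both act faithfully on $\overline{\Omega}$.
   Context: Permutations act on the right. For $X\leq{\rm Sym}(\Omega)$, the $2$-closure of $X$ on $\Omega$ is $X^{(2),\Omega}=\{\theta\in{\rm Sym}(\Omega)\mid \forall \alpha,\beta\in\Omega\ \exists g\in X:\ \alpha^\theta=\alpha^g,\ \beta^\theta=\beta^g\}$; it is a subgroup of ${\rm Sym}(\Omega)$ containing $X$. $\alpha^H$ denotes the $H$-orbit of $\alpha$. *)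

theory Defs
  imports "HOL-Algebra.Algebra"
begin

text \<open>Permutations of Om are the elements of carrier (BijGroup Om) (extensional bijections).
  The image of a point a under a permutation g is written g a.\<close>

definition two_closure :: "'a set \<Rightarrow> ('a \<Rightarrow> 'a) set \<Rightarrow> ('a \<Rightarrow> 'a) set" where
  "two_closure Om Y = {th \<in> carrier (BijGroup Om).
      \<forall>a\<in>Om. \<forall>b\<in>Om. \<exists>g\<in>Y. th a = g a \<and> th b = g b}"

definition perm_orbit :: "('a \<Rightarrow> 'a) set \<Rightarrow> 'a \<Rightarrow> 'a set" where
  "perm_orbit H a = {h a | h. h \<in> H}"

definition internal_direct_product :: "'a set \<Rightarrow> ('a \<Rightarrow> 'a) set \<Rightarrow> ('a \<Rightarrow> 'a) set \<Rightarrow> ('a \<Rightarrow> 'a) set \<Rightarrow> bool" where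
  "internal_direct_product Om G H K \<longleftrightarrow>
     subgroup G (BijGroup Om) \<and> subgroup H (BijGroup Om) \<and> subgroup K (BijGroup Om) \<and>
     H <#>\<^bsub>BijGroup Om\<^esub> K = G \<and>
     H \<inter> K = {\<one>\<^bsub>BijGroup Om\<^esub>} \<and>
     (\<forall>h\<in>H. \<forall>k\<in>K. h \<otimes>\<^bsub>BijGroup Om\<^esub> k = k \<otimes>\<^bsub>BijGroup Om\<^esub> h)"

end

theory Submission
  imports Defs
begin

text \<open>
  Since K commutes with H and H is abelian, H is central in G. A permutation t in the
  2-closure agrees with some g \<in> G on both a and h a, so t (h a) = g (h a) = h (g a) = h (t a):
  H stays central, hence normal, in the 2-closure.

  If k \<in> K maps a into its H-orbit, say k a = h a, then f = h^-1 k fixes a and commutes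
  with h. As |H| and |K| are coprime, some multiple e of |H| is 1 modulo |K|, and
  k = k^e = h^e f^e = f^e, so k fixes a. Consequently an element h k of G preserves
  all H-orbits only if k = 1, and an element of the 2-closure of G that preserves all
  H-orbits agrees on any two points with an element of G acting there like its
  H-component, i.e. it lies in the 2-closure of H. A nontrivial k \<in> K moves some point
  outside its H-orbit, so H is intransitive.
\<close>

lemma (in group) eq_pow_of_coprime_commuting:
  fixes m n :: nat
  assumes x: "x \<in> carrier G" and z: "z \<in> carrier G" and comm: "x \<otimes> z = z \<otimes> x"
    and "x [^] m = \<one>" and "z [^] n = \<one>" and "coprime m n"
  shows "\<exists>e::nat. z = (inv x \<otimes> z) [^] e"
proof (cases "m = 0")
  case True
  then have "n = 1" using \<open>coprime m n\<close> by simp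
  then show ?thesis using \<open>z [^] n = \<one>\<close> z by (intro exI[of _ 0]) simp
next
  case False
  define y where "y = inv x \<otimes> z"
  have y: "y \<in> carrier G" using x z y_def by simp
  have xy: "x \<otimes> y = z" using x z y_def by (simp add: m_assoc[symmetric])
  have "y \<otimes> x = inv x \<otimes> (x \<otimes> z)" using x z comm y_def by (simp add: m_assoc)
  also have "\<dots> = z" using x z by (simp add: m_assoc[symmetric])
  finally have comm_xy: "x \<otimes> y = y \<otimes> x" using xy by simp
  obtain a b where "m * a = n * b + gcd m n" using bezout_nat[OF False] by blast
  then have bez: "m * a = n * b + 1" using \<open>coprime m n\<close> by simp
  have "z = z [^] (n * b) \<otimes> z [^] (1::nat)"
    using z \<open>z [^] n = \<one>\<close> by (simp add: nat_pow_pow[symmetric])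
  also have "\<dots> = (x \<otimes> y) [^] (m * a)" using z xy bez by (simp add: nat_pow_mult)
  also have "\<dots> = y [^] (m * a)"
    using x y \<open>x [^] m = \<one>\<close> comm_xy by (simp add: pow_mult_distrib nat_pow_pow[symmetric])
  finally show ?thesis unfolding y_def by blast
qed

lemma (in group) subgroup_pow_card_eq_one:
  assumes "subgroup H G" and "h \<in> H"
  shows "h [^] card H = \<one>"
proof -
  interpret H: group "G\<lparr>carrier := H\<rparr>" using subgroup_imp_group[OF assms(1)] .
  have "h [^]\<^bsub>G\<lparr>carrier := H\<rparr>\<^esub> order (G\<lparr>carrier := H\<rparr>) = \<one>\<^bsub>G\<lparr>carrier := H\<rparr>\<^esub>"
    using assms(2) by (intro H.pow_order_eq_1) simp
  then show ?thesis by (simp add: order_def nat_pow_consistent[symmetric])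
qed

interpretation BijGroup: group "BijGroup S" for S
  by (rule group_BijGroup)

lemma carrier_BijGroup: "carrier (BijGroup S) = Bij S"
  by (simp add: BijGroup_def)

lemma BijGroup_mult_apply:
  "f \<in> carrier (BijGroup S) \<Longrightarrow> g \<in> carrier (BijGroup S) \<Longrightarrow> a \<in> S
    \<Longrightarrow> (f \<otimes>\<^bsub>BijGroup S\<^esub> g) a = f (g a)"
  by (simp add: BijGroup_def compose_def)

lemma BijGroup_one_apply: "a \<in> S \<Longrightarrow> \<one>\<^bsub>BijGroup S\<^esub> a = a"
  by (simp add: BijGroup_def)

lemma BijGroup_apply_closed: "f \<in> carrier (BijGroup S) \<Longrightarrow> a \<in> S \<Longrightarrow> f a \<in> S"
  unfolding carrier_BijGroup by (drule Bij_imp_funcset) (erule funcset_mem)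

lemma BijGroup_eqI:
  "f \<in> carrier (BijGroup S) \<Longrightarrow> g \<in> carrier (BijGroup S) \<Longrightarrow> (\<And>a. a \<in> S \<Longrightarrow> f a = g a) \<Longrightarrow> f = g"
  unfolding carrier_BijGroup by (intro extensionalityI[of f S g]) (auto dest: Bij_imp_extensional)

lemma BijGroup_inv_apply_apply:
  "f \<in> carrier (BijGroup S) \<Longrightarrow> a \<in> S \<Longrightarrow> (inv\<^bsub>BijGroup S\<^esub> f) (f a) = a"
  using BijGroup_mult_apply[of "inv\<^bsub>BijGroup S\<^esub> f" S f a] BijGroup_one_apply[of a S]
  by simp

lemma BijGroup_apply_inv_apply:
  "f \<in> carrier (BijGroup S) \<Longrightarrow> a \<in> S \<Longrightarrow> f ((inv\<^bsub>BijGroup S\<^esub> f) a) = a"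
  using BijGroup_mult_apply[of f S "inv\<^bsub>BijGroup S\<^esub> f" a] BijGroup_one_apply[of a S]
  by simp

lemma BijGroup_pow_apply_fixed:
  "f \<in> carrier (BijGroup S) \<Longrightarrow> a \<in> S \<Longrightarrow> f a = a \<Longrightarrow> (f [^]\<^bsub>BijGroup S\<^esub> (n::nat)) a = a"
  by (induction n)
    (simp_all add: BijGroup_one_apply BijGroup_mult_apply)

lemma two_closureI:
  "t \<in> carrier (BijGroup S) \<Longrightarrow> (\<And>a b. a \<in> S \<Longrightarrow> b \<in> S \<Longrightarrow> \<exists>g\<in>Y. t a = g a \<and> t b = g b)
    \<Longrightarrow> t \<in> two_closure S Y"
  by (simp add: two_closure_def)

lemma two_closureE:
  assumes "t \<in> two_closure S Y" and "a \<in> S" and "b \<in> S"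
  obtains g where "g \<in> Y" and "t a = g a" and "t b = g b"
  using assms by (auto simp: two_closure_def)

lemma two_closure_subset_carrier: "two_closure S Y \<subseteq> carrier (BijGroup S)"
  by (auto simp: two_closure_def)

lemma subset_two_closure: "Y \<subseteq> carrier (BijGroup S) \<Longrightarrow> Y \<subseteq> two_closure S Y"
  by (auto intro!: two_closureI)

lemma two_closure_mono: "Y \<subseteq> Z \<Longrightarrow> two_closure S Y \<subseteq> two_closure S Z"
  by (auto simp: two_closure_def) blast

lemma subgroup_two_closure:
  assumes Y: "subgroup Y (BijGroup S)"
  shows "subgroup (two_closure S Y) (BijGroup S)"
proof (rule BijGroup.subgroupI[OF two_closure_subset_carrier])
  have "\<one>\<^bsub>BijGroup S\<^esub> \<in> two_closure S Y"
    using subset_two_closure[OF subgroup.subset[OF Y]] subgroup.one_closed[OF Y] by blast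
  then show "two_closure S Y \<noteq> {}" by blast
next
  fix t assume t: "t \<in> two_closure S Y"
  then have tc: "t \<in> carrier (BijGroup S)" using two_closure_subset_carrier by blast
  show "inv\<^bsub>BijGroup S\<^esub> t \<in> two_closure S Y"
  proof (rule two_closureI)
    show "inv\<^bsub>BijGroup S\<^esub> t \<in> carrier (BijGroup S)" using tc by simp
    fix a b assume a: "a \<in> S" and b: "b \<in> S"
    let ?a' = "(inv\<^bsub>BijGroup S\<^esub> t) a" and ?b' = "(inv\<^bsub>BijGroup S\<^esub> t) b"
    have a': "?a' \<in> S" and b': "?b' \<in> S"
      using BijGroup_apply_closed[OF BijGroup.inv_closed[OF tc]] a b by blast+
    obtain g where g: "g \<in> Y" "t ?a' = g ?a'" "t ?b' = g ?b'"
      by (rule two_closureE[OF t a' b'])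
    have gc: "g \<in> carrier (BijGroup S)" using subgroup.mem_carrier[OF Y g(1)] .
    have "g ?a' = a" "g ?b' = b"
      unfolding g(2,3)[symmetric] using BijGroup_apply_inv_apply[OF tc] a b by blast+
    then have "(inv\<^bsub>BijGroup S\<^esub> g) a = ?a'" "(inv\<^bsub>BijGroup S\<^esub> g) b = ?b'"
      using BijGroup_inv_apply_apply[OF gc a'] BijGroup_inv_apply_apply[OF gc b'] by simp_all
    moreover have "inv\<^bsub>BijGroup S\<^esub> g \<in> Y" using subgroup.m_inv_closed[OF Y g(1)] .
    ultimately show "\<exists>g\<in>Y. ?a' = g a \<and> ?b' = g b" by metis
  qed
next
  fix s t assume s: "s \<in> two_closure S Y" and t: "t \<in> two_closure S Y"
  then have sc: "s \<in> carrier (BijGroup S)" and tc: "t \<in> carrier (BijGroup S)"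
    using two_closure_subset_carrier by blast+
  show "s \<otimes>\<^bsub>BijGroup S\<^esub> t \<in> two_closure S Y"
  proof (rule two_closureI)
    show "s \<otimes>\<^bsub>BijGroup S\<^esub> t \<in> carrier (BijGroup S)" using sc tc by simp
    fix a b assume ab: "a \<in> S" "b \<in> S"
    obtain g2 where g2: "g2 \<in> Y" "t a = g2 a" "t b = g2 b"
      using two_closureE[OF t ab] .
    have g2c: "g2 \<in> carrier (BijGroup S)" using subgroup.mem_carrier[OF Y g2(1)] .
    obtain g1 where g1: "g1 \<in> Y" "s (g2 a) = g1 (g2 a)" "s (g2 b) = g1 (g2 b)"
      using two_closureE[OF s BijGroup_apply_closed[OF g2c ab(1)] BijGroup_apply_closed[OF g2c ab(2)]] .
    have g1c: "g1 \<in> carrier (BijGroup S)" using subgroup.mem_carrier[OF Y g1(1)] .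
    have "(s \<otimes>\<^bsub>BijGroup S\<^esub> t) a = (g1 \<otimes>\<^bsub>BijGroup S\<^esub> g2) a"
      "(s \<otimes>\<^bsub>BijGroup S\<^esub> t) b = (g1 \<otimes>\<^bsub>BijGroup S\<^esub> g2) b"
      using sc tc g1c g2c ab g1 g2 by (simp_all add: BijGroup_mult_apply)
    moreover have "g1 \<otimes>\<^bsub>BijGroup S\<^esub> g2 \<in> Y" using subgroup.m_closed[OF Y g1(1) g2(1)] .
    ultimately show "\<exists>g\<in>Y. (s \<otimes>\<^bsub>BijGroup S\<^esub> t) a = g a \<and> (s \<otimes>\<^bsub>BijGroup S\<^esub> t) b = g b"
      by blast
  qed
qed

lemma two_closure_commute:
  assumes h: "h \<in> carrier (BijGroup S)" and comm: "\<And>g. g \<in> Y \<Longrightarrow> g \<otimes>\<^bsub>BijGroup S\<^esub> h = h \<otimes>\<^bsub>BijGroup S\<^esub> g"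
    and Y: "Y \<subseteq> carrier (BijGroup S)" and t: "t \<in> two_closure S Y"
  shows "t \<otimes>\<^bsub>BijGroup S\<^esub> h = h \<otimes>\<^bsub>BijGroup S\<^esub> t"
proof -
  have tc: "t \<in> carrier (BijGroup S)" using t two_closure_subset_carrier by blast
  show ?thesis
  proof (rule BijGroup_eqI)
    show "t \<otimes>\<^bsub>BijGroup S\<^esub> h \<in> carrier (BijGroup S)" "h \<otimes>\<^bsub>BijGroup S\<^esub> t \<in> carrier (BijGroup S)"
      using tc h by simp_all
    fix a assume a: "a \<in> S"
    obtain g where g: "g \<in> Y" "t a = g a" "t (h a) = g (h a)"
      by (rule two_closureE[OF t a BijGroup_apply_closed[OF h a]])
    have gc: "g \<in> carrier (BijGroup S)" using g(1) Y by blast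
    have "(t \<otimes>\<^bsub>BijGroup S\<^esub> h) a = (g \<otimes>\<^bsub>BijGroup S\<^esub> h) a"
      using tc gc h a g by (simp add: BijGroup_mult_apply)
    also have "\<dots> = (h \<otimes>\<^bsub>BijGroup S\<^esub> g) a" using comm[OF g(1)] by simp
    also have "\<dots> = (h \<otimes>\<^bsub>BijGroup S\<^esub> t) a"
      using tc gc h a g by (simp add: BijGroup_mult_apply)
    finally show "(t \<otimes>\<^bsub>BijGroup S\<^esub> h) a = (h \<otimes>\<^bsub>BijGroup S\<^esub> t) a" .
  qed
qed

lemma normal_two_closure_if_central:
  assumes Y: "subgroup Y (BijGroup S)" and H: "subgroup H (BijGroup S)" and "H \<subseteq> Y"
    and central: "\<And>h g. h \<in> H \<Longrightarrow> g \<in> Y \<Longrightarrow> g \<otimes>\<^bsub>BijGroup S\<^esub> h = h \<otimes>\<^bsub>BijGroup S\<^esub> g"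
  shows "H \<lhd> (BijGroup S)\<lparr>carrier := two_closure S Y\<rparr>"
proof -
  have T: "subgroup (two_closure S Y) (BijGroup S)" using subgroup_two_closure[OF Y] .
  show ?thesis
  proof (rule group.normalI[OF BijGroup.subgroup_imp_group[OF T]])
    have "H \<subseteq> two_closure S Y"
      using \<open>H \<subseteq> Y\<close> subset_two_closure[OF subgroup.subset[OF Y]] by blast
    then show "subgroup H ((BijGroup S)\<lparr>carrier := two_closure S Y\<rparr>)"
      using BijGroup.subgroup_incl H T by blast
    show "\<forall>t\<in>carrier ((BijGroup S)\<lparr>carrier := two_closure S Y\<rparr>).
        H #>\<^bsub>(BijGroup S)\<lparr>carrier := two_closure S Y\<rparr>\<^esub> t = t <#\<^bsub>(BijGroup S)\<lparr>carrier := two_closure S Y\<rparr>\<^esub> H"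
    proof
      fix t assume "t \<in> carrier ((BijGroup S)\<lparr>carrier := two_closure S Y\<rparr>)"
      then have comm: "t \<otimes>\<^bsub>BijGroup S\<^esub> h = h \<otimes>\<^bsub>BijGroup S\<^esub> t" if "h \<in> H" for h
        using two_closure_commute[OF subgroup.mem_carrier[OF H that] central subgroup.subset[OF Y]]
          that by simp
      show "H #>\<^bsub>(BijGroup S)\<lparr>carrier := two_closure S Y\<rparr>\<^esub> t = t <#\<^bsub>(BijGroup S)\<lparr>carrier := two_closure S Y\<rparr>\<^esub> H"
        unfolding r_coset_def l_coset_def by (rule SUP_cong[OF refl]) (simp add: comm)
    qed
  qed
qed

lemma mem_perm_orbit_iff: "b \<in> perm_orbit H a \<longleftrightarrow> (\<exists>h\<in>H. b = h a)"
  by (auto simp: perm_orbit_def)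

lemma perm_orbit_self:
  "subgroup H (BijGroup S) \<Longrightarrow> a \<in> S \<Longrightarrow> a \<in> perm_orbit H a"
  unfolding mem_perm_orbit_iff
  by (intro bexI[of _ "\<one>\<^bsub>BijGroup S\<^esub>"]) (simp_all add: BijGroup_one_apply subgroup.one_closed)

lemma perm_orbit_apply:
  assumes H: "subgroup H (BijGroup S)" and h: "h \<in> H" and a: "a \<in> S"
  shows "perm_orbit H (h a) = perm_orbit H a"
proof (intro equalityI subsetI)
  have hc: "h \<in> carrier (BijGroup S)" using subgroup.mem_carrier[OF H h] .
  fix b
  assume "b \<in> perm_orbit H (h a)"
  then obtain h' where h': "h' \<in> H" "b = h' (h a)" by (auto simp: mem_perm_orbit_iff)
  then have "b = (h' \<otimes>\<^bsub>BijGroup S\<^esub> h) a"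
    using BijGroup_mult_apply[OF subgroup.mem_carrier[OF H h'(1)] hc a] by simp
  then show "b \<in> perm_orbit H a"
    using subgroup.m_closed[OF H h'(1) h] by (auto simp: mem_perm_orbit_iff)
next
  have hc: "h \<in> carrier (BijGroup S)" using subgroup.mem_carrier[OF H h] .
  fix b
  assume "b \<in> perm_orbit H a"
  then obtain h' where h': "h' \<in> H" "b = h' a" by (auto simp: mem_perm_orbit_iff)
  then have "b = (h' \<otimes>\<^bsub>BijGroup S\<^esub> inv\<^bsub>BijGroup S\<^esub> h) (h a)"
    using BijGroup_mult_apply[OF subgroup.mem_carrier[OF H h'(1)] BijGroup.inv_closed[OF hc]
        BijGroup_apply_closed[OF hc a]] BijGroup_inv_apply_apply[OF hc a]
    by simp
  then show "b \<in> perm_orbit H (h a)"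
    using subgroup.m_closed[OF H h'(1) subgroup.m_inv_closed[OF H h]] by (auto simp: mem_perm_orbit_iff)
qed

lemma perm_orbit_eq:
  assumes "subgroup H (BijGroup S)" and "a \<in> S" and "b \<in> perm_orbit H a"
  shows "perm_orbit H b = perm_orbit H a"
proof -
  obtain h where "h \<in> H" and "b = h a" using assms(3) by (auto simp: mem_perm_orbit_iff)
  then show ?thesis using perm_orbit_apply[OF assms(1) _ assms(2)] by simp
qed

locale perm_direct_product =
  fixes Om :: "'a set" and G H K :: "('a \<Rightarrow> 'a) set"
  assumes internal_direct_product: "internal_direct_product Om G H K"
begin

abbreviation (input) Sym :: "('a \<Rightarrow> 'a) monoid" where "Sym \<equiv> BijGroup Om"

lemma subgroup_G: "subgroup G Sym"
  and subgroup_H: "subgroup H Sym"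
  and subgroup_K: "subgroup K Sym"
  and set_mult_H_K: "H <#>\<^bsub>Sym\<^esub> K = G"
  and H_commute_K: "h \<in> H \<Longrightarrow> k \<in> K \<Longrightarrow> h \<otimes>\<^bsub>Sym\<^esub> k = k \<otimes>\<^bsub>Sym\<^esub> h"
  using internal_direct_product unfolding internal_direct_product_def by auto

lemma H_carrier: "h \<in> H \<Longrightarrow> h \<in> carrier Sym"
  and K_carrier: "k \<in> K \<Longrightarrow> k \<in> carrier Sym"
  using subgroup.mem_carrier[OF subgroup_H] subgroup.mem_carrier[OF subgroup_K] by auto

lemma H_subset_G: "H \<subseteq> G"
proof
  fix h assume "h \<in> H"
  then have "h \<otimes>\<^bsub>Sym\<^esub> \<one>\<^bsub>Sym\<^esub> \<in> H <#>\<^bsub>Sym\<^esub> K"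
    unfolding set_mult_def using subgroup.one_closed[OF subgroup_K] by blast
  then show "h \<in> G" using H_carrier[OF \<open>h \<in> H\<close>] set_mult_H_K by simp
qed

lemma G_decompose:
  assumes "g \<in> G"
  obtains h k where "h \<in> H" and "k \<in> K" and "g = h \<otimes>\<^bsub>Sym\<^esub> k"
  using assms unfolding set_mult_H_K[symmetric] set_mult_def by blast

lemma central_if_abelian:
  assumes abelian: "\<forall>x\<in>H. \<forall>y\<in>H. x \<otimes>\<^bsub>Sym\<^esub> y = y \<otimes>\<^bsub>Sym\<^esub> x"
    and h: "h \<in> H" and g: "g \<in> G"
  shows "g \<otimes>\<^bsub>Sym\<^esub> h = h \<otimes>\<^bsub>Sym\<^esub> g"
proof -
  obtain h' k where hk: "h' \<in> H" "k \<in> K" "g = h' \<otimes>\<^bsub>Sym\<^esub> k" using G_decompose[OF g] .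
  note c = H_carrier[OF h] H_carrier[OF hk(1)] K_carrier[OF hk(2)]
  have "g \<otimes>\<^bsub>Sym\<^esub> h = h' \<otimes>\<^bsub>Sym\<^esub> (h \<otimes>\<^bsub>Sym\<^esub> k)"
    using c hk(3) H_commute_K[OF h hk(2)] by (simp add: BijGroup.m_assoc)
  also have "\<dots> = h \<otimes>\<^bsub>Sym\<^esub> g"
    using c hk(3) abelian h hk(1) by (simp add: BijGroup.m_assoc[symmetric])
  finally show ?thesis .
qed

lemma normal_in_two_closure_if_abelian:
  assumes "\<forall>x\<in>H. \<forall>y\<in>H. x \<otimes>\<^bsub>Sym\<^esub> y = y \<otimes>\<^bsub>Sym\<^esub> x"
  shows "H \<lhd> Sym\<lparr>carrier := two_closure Om G\<rparr>"
  using normal_two_closure_if_central[OF subgroup_G subgroup_H H_subset_G]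
    central_if_abelian[OF assms] by blast

lemma fixed_if_in_orbit:
  assumes cop: "coprime (card H) (card K)" and k: "k \<in> K" and a: "a \<in> Om"
    and orb: "k a \<in> perm_orbit H a"
  shows "k a = a"
proof -
  obtain h where h: "h \<in> H" and kah: "k a = h a" using orb by (auto simp: mem_perm_orbit_iff)
  note hc = H_carrier[OF h] and kc = K_carrier[OF k]
  define f where "f = inv\<^bsub>Sym\<^esub> h \<otimes>\<^bsub>Sym\<^esub> k"
  have fc: "f \<in> carrier Sym" unfolding f_def using hc kc by simp
  have "f a = a"
    unfolding f_def using hc kc a kah BijGroup_inv_apply_apply[OF hc a]
    by (simp add: BijGroup_mult_apply)
  moreover obtain e :: nat where "k = f [^]\<^bsub>Sym\<^esub> e"
    using BijGroup.eq_pow_of_coprime_commuting[OF hc kc H_commute_K[OF h k]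
        BijGroup.subgroup_pow_card_eq_one[OF subgroup_H h]
        BijGroup.subgroup_pow_card_eq_one[OF subgroup_K k] cop]
    unfolding f_def by blast
  ultimately show ?thesis using BijGroup_pow_apply_fixed[OF fc a] by simp
qed

lemma K_component_fixed_if_in_orbit:
  assumes cop: "coprime (card H) (card K)" and h: "h \<in> H" and k: "k \<in> K" and a: "a \<in> Om"
    and orb: "(h \<otimes>\<^bsub>Sym\<^esub> k) a \<in> perm_orbit H a"
  shows "k a = a"
proof -
  have ka: "k a \<in> Om" using BijGroup_apply_closed[OF K_carrier[OF k] a] .
  have "perm_orbit H (k a) = perm_orbit H (h (k a))"
    using perm_orbit_apply[OF subgroup_H h ka] by simp
  also have "\<dots> = perm_orbit H a"
    using perm_orbit_eq[OF subgroup_H a] orb BijGroup_mult_apply[OF H_carrier[OF h] K_carrier[OF k] a]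
    by simp
  finally show ?thesis
    using fixed_if_in_orbit[OF cop k a] perm_orbit_self[OF subgroup_H ka] by simp
qed

lemma intransitive_if_coprime:
  assumes cop: "coprime (card H) (card K)" and nontrivial: "K \<noteq> {\<one>\<^bsub>Sym\<^esub>}"
  shows "\<exists>a\<in>Om. perm_orbit H a \<noteq> Om"
proof -
  obtain k where k: "k \<in> K" and "k \<noteq> \<one>\<^bsub>Sym\<^esub>"
    using nontrivial subgroup.one_closed[OF subgroup_K] by blast
  then obtain a where a: "a \<in> Om" and "k a \<noteq> a"
    using BijGroup_eqI[OF K_carrier[OF k] BijGroup.one_closed] BijGroup_one_apply by metis
  then have "k a \<notin> perm_orbit H a" using fixed_if_in_orbit[OF cop k a] by blast
  then show ?thesis using a BijGroup_apply_closed[OF K_carrier[OF k] a] by blast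
qed

lemma orbit_kernel_eq_if_coprime:
  assumes cop: "coprime (card H) (card K)"
  shows "{g \<in> G. \<forall>a\<in>Om. perm_orbit H (g a) = perm_orbit H a} = H"
proof (intro equalityI subsetI)
  fix g assume "g \<in> {g \<in> G. \<forall>a\<in>Om. perm_orbit H (g a) = perm_orbit H a}"
  then have g: "g \<in> G" and orb: "\<And>a. a \<in> Om \<Longrightarrow> perm_orbit H (g a) = perm_orbit H a" by auto
  obtain h k where hk: "h \<in> H" "k \<in> K" "g = h \<otimes>\<^bsub>Sym\<^esub> k" using G_decompose[OF g] .
  have "k = \<one>\<^bsub>Sym\<^esub>"
  proof (rule BijGroup_eqI[OF K_carrier[OF hk(2)] BijGroup.one_closed])
    fix a assume a: "a \<in> Om"
    have "g a \<in> perm_orbit H a"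
      using orb[OF a] perm_orbit_self[OF subgroup_H BijGroup_apply_closed[OF subgroup.mem_carrier[OF subgroup_G g] a]]
      by simp
    then show "k a = \<one>\<^bsub>Sym\<^esub> a"
      using K_component_fixed_if_in_orbit[OF cop hk(1,2) a] hk(3) BijGroup_one_apply[OF a] by simp
  qed
  then show "g \<in> H" using hk H_carrier by simp
next
  fix h assume h: "h \<in> H"
  then show "h \<in> {g \<in> G. \<forall>a\<in>Om. perm_orbit H (g a) = perm_orbit H a}"
    using H_subset_G perm_orbit_apply[OF subgroup_H h] by blast
qed

lemma orbit_kernel_two_closure_eq_if_coprime:
  assumes cop: "coprime (card H) (card K)"
  shows "{x \<in> two_closure Om G. \<forall>a\<in>Om. perm_orbit H (x a) = perm_orbit H a} = two_closure Om H"
proof (intro equalityI subsetI)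
  fix t assume "t \<in> {x \<in> two_closure Om G. \<forall>a\<in>Om. perm_orbit H (x a) = perm_orbit H a}"
  then have t: "t \<in> two_closure Om G" and orb: "\<And>a. a \<in> Om \<Longrightarrow> perm_orbit H (t a) = perm_orbit H a"
    by auto
  have tc: "t \<in> carrier Sym" using t two_closure_subset_carrier by blast
  show "t \<in> two_closure Om H"
  proof (rule two_closureI[OF tc])
    fix a b assume a: "a \<in> Om" and b: "b \<in> Om"
    obtain g where g: "g \<in> G" "t a = g a" "t b = g b" by (rule two_closureE[OF t a b])
    obtain h k where hk: "h \<in> H" "k \<in> K" "g = h \<otimes>\<^bsub>Sym\<^esub> k" using G_decompose[OF g(1)] .
    have "g c = h c" if c: "c \<in> Om" and tc_eq: "t c = g c" for c
    proof -
      have "g c \<in> perm_orbit H c"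
        using orb[OF c] perm_orbit_self[OF subgroup_H BijGroup_apply_closed[OF tc c]] tc_eq by simp
      then have "k c = c" using K_component_fixed_if_in_orbit[OF cop hk(1,2) c] hk(3) by simp
      then show ?thesis using hk(3) BijGroup_mult_apply[OF H_carrier[OF hk(1)] K_carrier[OF hk(2)] c] by simp
    qed
    then show "\<exists>h\<in>H. t a = h a \<and> t b = h b" using a b g hk(1) by metis
  qed
next
  fix t assume t: "t \<in> two_closure Om H"
  have "perm_orbit H (t a) = perm_orbit H a" if a: "a \<in> Om" for a
  proof -
    obtain h where "h \<in> H" "t a = h a" by (rule two_closureE[OF t a a])
    then show ?thesis using perm_orbit_apply[OF subgroup_H _ a] by simp
  qed
  then show "t \<in> {x \<in> two_closure Om G. \<forall>a\<in>Om. perm_orbit H (x a) = perm_orbit H a}"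
    using t two_closure_mono[OF H_subset_G] by blast
qed

end

theorem mainTheorem15:
  fixes Om :: "'a set" and G H K :: "('a \<Rightarrow> 'a) set"
  assumes "finite G"
    and "internal_direct_product Om G H K"
    and "H \<noteq> {\<one>\<^bsub>BijGroup Om\<^esub>}" and "K \<noteq> {\<one>\<^bsub>BijGroup Om\<^esub>}"
    and "\<forall>x\<in>H. \<forall>y\<in>H. x \<otimes>\<^bsub>BijGroup Om\<^esub> y = y \<otimes>\<^bsub>BijGroup Om\<^esub> x"
  shows "H \<lhd> (BijGroup Om)\<lparr>carrier := two_closure Om G\<rparr>
    \<and> (coprime (card H) (card K) \<longrightarrow>
           (\<exists>a\<in>Om. perm_orbit H a \<noteq> Om)
         \<and> {g \<in> G. \<forall>a\<in>Om. perm_orbit H (g a) = perm_orbit H a} = H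
         \<and> {x \<in> two_closure Om G. \<forall>a\<in>Om. perm_orbit H (x a) = perm_orbit H a}
             = two_closure Om H)"
proof -
  interpret perm_direct_product Om G H K by (unfold_locales) (rule assms(2))
  show ?thesis
    using normal_in_two_closure_if_abelian[OF assms(5)] intransitive_if_coprime[OF _ assms(4)]
      orbit_kernel_eq_if_coprime orbit_kernel_two_closure_eq_if_coprime
    by blast
qed

end
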